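(* Assume there are $N$ pursuers with positions $\mathbf{x}_{P_i}$ and maximal speeds $u_i$, each faster than the evader ($\nu_i:=\nu_E/u_i<1$), and $\mathbf{x}_E(t_0)\neq\mathbf{x}_{P_i}(t_0)$ for all $i$. Let $\mathcal I=\bigcap_{i}\mathcal A_i(t_0)$. Suppose each pursuer $i$ independently uses (after normalizing its speed) the law $\mathbf{v}_{P_i}=u_i\,\mathbf{z}_{P_i}/\|\mathbf{z}_{P_i}\|$, $\mathbf{z}_{P_i}=(R_{\mathcal C_i}-R_{\mathcal A_i})\mathbf{r}_i/\|\mathbf{r}_i\|+\nu_i\mathbf{y}_i$, with parameter $\delta>0$. Then for every admissible evader control, capture by some pursuer occurs in finite time at a point of $\bigcap_i\mathcal C_i$; consequently, for a closed target set $\mathcal T$ with $\mathcal I\cap\mathcal T=\emptyset$, for all sufficiently small $\delta>0$ the pursuers win the Generalized Target Guarding game.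
   Context: Setting: planar simple motion. The evader has position $\mathbf{x}_E$ with $\dot{\mathbf{x}}_E=\mathbf{v}_E$, $\|\mathbf{v}_E\|\le\nu_E$; pursuer $i$ has position $\mathbf{x}_{P_i}$ with $\dot{\mathbf{x}}_{P_i}=\mathbf{v}_{P_i}$, $\|\mathbf{v}_{P_i}\|\le u_i$. Capture occurs at the first time some $\mathbf{x}_{P_i}=\mathbf{x}_E$. For each $i$, with $\nu_i=\nu_E/u_i<1$, set $\alpha_i=1/(1-\nu_i^2)$, $\gamma_i=\nu_i\alpha_i$, $\beta_i=\nu_i^2\alpha_i$, $\mathbf{r}_i=\mathbf{x}_E-\mathbf{x}_{P_i}$; the Apollonius disc $\mathcal A_i(t)$ is the closed disc with center $\mathbf{x}_{\mathcal A_i}(t)=\alpha_i\mathbf{x}_E(t)-\beta_i\mathbf{x}_{P_i}(t)$ and radius $R_{\mathcal A_i}(t)=\gamma_i\|\mathbf{r}_i(t)\|$; $\mathcal C_i$ is the closed disc with center $\mathbf{x}_{\mathcal C_i}=\mathbf{x}_{\mathcal A_i}(t_0)$ and radius $R_{\mathcal C_i}=R_{\mathcal A_i}(t_0)+\delta$; $\mathbf{y}_i=\mathbf{x}_{\mathcal A_i}-\mathbf{x}_{\mathcal C_i}$. Generalized Target Guarding: the evader wins if it reaches a point of $\mathcal T$ no later than capture; the pursuers win if capture occurs strictly before. *)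

theory Defs
  imports "HOL-Analysis.Analysis"
begin

type_synonym pt = "real^2"

definition nu_ratio :: "real \<Rightarrow> real \<Rightarrow> real" where
  "nu_ratio nuE u = nuE / u"
definition alpha_c :: "real \<Rightarrow> real \<Rightarrow> real" where
  "alpha_c nuE u = 1 / (1 - (nu_ratio nuE u)^2)"
definition gamma_c :: "real \<Rightarrow> real \<Rightarrow> real" where
  "gamma_c nuE u = nu_ratio nuE u * alpha_c nuE u"
definition beta_c :: "real \<Rightarrow> real \<Rightarrow> real" where
  "beta_c nuE u = (nu_ratio nuE u)^2 * alpha_c nuE u"

definition apoll_center :: "real \<Rightarrow> real \<Rightarrow> pt \<Rightarrow> pt \<Rightarrow> pt" where
  "apoll_center nuE u xE xP = alpha_c nuE u *\<^sub>R xE - beta_c nuE u *\<^sub>R xP"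
definition apoll_radius :: "real \<Rightarrow> real \<Rightarrow> pt \<Rightarrow> pt \<Rightarrow> real" where
  "apoll_radius nuE u xE xP = gamma_c nuE u * norm (xE - xP)"
definition apoll_disc :: "real \<Rightarrow> real \<Rightarrow> pt \<Rightarrow> pt \<Rightarrow> pt set" where
  "apoll_disc nuE u xE xP = cball (apoll_center nuE u xE xP) (apoll_radius nuE u xE xP)"

definition C_disc :: "real \<Rightarrow> real \<Rightarrow> real \<Rightarrow> pt \<Rightarrow> pt \<Rightarrow> pt set" where
  "C_disc nuE u \<delta> xE0 xP0 = cball (apoll_center nuE u xE0 xP0) (apoll_radius nuE u xE0 xP0 + \<delta>)"

definition pursuer_vel :: "real \<Rightarrow> real \<Rightarrow> real \<Rightarrow> pt \<Rightarrow> pt \<Rightarrow> pt \<Rightarrow> pt \<Rightarrow> pt" where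
  "pursuer_vel nuE u \<delta> xE0 xP0 xE xP =
     (let RC = apoll_radius nuE u xE0 xP0 + \<delta>;
          RA = apoll_radius nuE u xE xP;
          r = xE - xP;
          y = apoll_center nuE u xE xP - apoll_center nuE u xE0 xP0;
          z = (RC - RA) *\<^sub>R ((1 / norm r) *\<^sub>R r) + nu_ratio nuE u *\<^sub>R y
      in (u / norm z) *\<^sub>R z)"

definition captured :: "nat \<Rightarrow> (real \<Rightarrow> pt) \<Rightarrow> (nat \<Rightarrow> real \<Rightarrow> pt) \<Rightarrow> real \<Rightarrow> bool" where
  "captured N xE xP t \<longleftrightarrow> (\<exists>i<N. xP i t = xE t)"

text \<open>Admissible evader trajectory: speed bounded by nuE, i.e. nuE-Lipschitz on [t0,oo).\<close>
definition admissible_evader :: "real \<Rightarrow> real \<Rightarrow> (real \<Rightarrow> pt) \<Rightarrow> bool" where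
  "admissible_evader nuE t0 xE \<longleftrightarrow>
     (\<forall>s t. t0 \<le> s \<longrightarrow> t0 \<le> t \<longrightarrow> norm (xE t - xE s) \<le> nuE * \<bar>t - s\<bar>)"

definition follows_law ::
  "nat \<Rightarrow> (nat \<Rightarrow> real) \<Rightarrow> real \<Rightarrow> real \<Rightarrow> real \<Rightarrow> (real \<Rightarrow> pt) \<Rightarrow> (nat \<Rightarrow> real \<Rightarrow> pt) \<Rightarrow> bool" where
  "follows_law N u nuE \<delta> t0 xE xP \<longleftrightarrow>
     (\<forall>i<N. continuous_on {t0..} (xP i)) \<and>
     (\<forall>t\<ge>t0. (\<forall>s\<in>{t0..t}. \<not> captured N xE xP s) \<longrightarrow>
        (\<forall>i<N. (xP i has_vector_derivative
                   pursuer_vel nuE (u i) \<delta> (xE t0) (xP i t0) (xE t) (xP i t))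
                (at t within {t0..})))"

definition capture_time :: "nat \<Rightarrow> real \<Rightarrow> (real \<Rightarrow> pt) \<Rightarrow> (nat \<Rightarrow> real \<Rightarrow> pt) \<Rightarrow> real \<Rightarrow> bool" where
  "capture_time N t0 xE xP T \<longleftrightarrow>
     t0 \<le> T \<and> captured N xE xP T \<and> (\<forall>s\<in>{t0..<T}. \<not> captured N xE xP s)"

definition pursuers_win :: "nat \<Rightarrow> real \<Rightarrow> pt set \<Rightarrow> (real \<Rightarrow> pt) \<Rightarrow> (nat \<Rightarrow> real \<Rightarrow> pt) \<Rightarrow> bool" where
  "pursuers_win N t0 Tg xE xP \<longleftrightarrow>
     (\<exists>T. capture_time N t0 xE xP T \<and> (\<forall>s\<in>{t0..T}. xE s \<notin> Tg))"

end

theory Submission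
  imports Defs
begin

text \<open>For each pursuer consider the margin h = (\<rho>^2 - |y|^2)/2, where \<rho> = R_C - R_A and
  y = x_A - x_C, so that initially h = \<delta>^2/2. Along the closed loop the lower right Dini derivative
  of h is at least \<gamma>(u |z| - \<nu>_E |w|), and |z|^2 - |\<nu> w|^2 = 2 (1 - \<nu>^2) h. Hence h never
  decreases, \<rho> cannot reach 0, and the evader, which lies in its own Apollonius disc, stays in C.
  Once h \<ge> \<delta>^2/2 and \<rho> \<le> R_C the rate is bounded below by a positive constant, while
  h \<le> R_C^2/2, so capture happens in bounded time. Finally, by compactness a closed target disjoint
  from the intersection of the discs A_i(t0) stays disjoint from the intersection of the slightly
  larger discs C_i once \<delta> is small.\<close>

lemma real_interval_induct:
  fixes a b :: real
  assumes "a \<le> b"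
    and closure: "\<And>x. x \<in> {a..b} \<Longrightarrow> \<forall>y\<in>{a..<x}. P y \<Longrightarrow> P x"
    and step: "\<And>x. x \<in> {a..<b} \<Longrightarrow> \<forall>y\<in>{a..x}. P y \<Longrightarrow> \<exists>d>0. \<forall>y\<in>{x<..<x + d}. P y"
  shows "P b"
proof -
  define S where "S = {x\<in>{a..b}. \<forall>y\<in>{a..x}. P y}"
  define m where "m = Sup S"
  have "P a" using closure[of a] \<open>a \<le> b\<close> by simp
  then have aS: "a \<in> S" using \<open>a \<le> b\<close> by (simp add: S_def)
  have bdd: "bdd_above S" unfolding S_def by (rule bdd_aboveI[of _ b]) simp
  have "a \<le> m" unfolding m_def using aS bdd by (rule cSup_upper)
  moreover have "m \<le> b" unfolding m_def using aS by (intro cSup_least) (auto simp: S_def)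
  ultimately have m: "m \<in> {a..b}" by simp
  have below: "P y" if y: "y \<in> {a..<m}" for y
  proof -
    have "S \<noteq> {}" "y < Sup S" using aS y by (auto simp: m_def)
    then obtain x where "x \<in> S" "y < x" using less_cSup_iff[OF _ bdd] by blast
    then show "P y" using y by (auto simp: S_def)
  qed
  have Pm: "P m" using closure[OF m] below by blast
  have mS: "P y" if "y \<in> {a..m}" for y
    using that below Pm by (cases "y = m") auto
  show "P b"
  proof (rule ccontr)
    assume "\<not> P b"
    then have "m < b" using m Pm by (cases "m = b") auto
    then obtain d where d: "d > 0" "\<forall>y\<in>{m<..<m + d}. P y" using step[of m] m mS by auto
    define x where "x = min (m + d/2) b"
    have "P y" if "y \<in> {a..x}" for y
    proof (cases "y \<le> m")
      case True
      then show ?thesis using mS that by auto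
    next
      case False
      then show ?thesis using d that by (auto simp: x_def)
    qed
    then have "x \<in> S" using d(1) m \<open>m < b\<close> by (auto simp: S_def x_def)
    then have "x \<le> m" unfolding m_def using bdd by (rule cSup_upper)
    then show False using d(1) \<open>m < b\<close> by (simp add: x_def)
  qed
qed

lemma growth_from_right_rate_eps:
  fixes f :: "real \<Rightarrow> real"
  assumes "a \<le> b" and cont: "continuous_on {a..b} f" and "0 \<le> c"
    and "0 < \<epsilon>" and \<epsilon>_small: "\<epsilon> * (b - a) < f a - L"
    and rate: "\<And>t. t \<in> {a..<b} \<Longrightarrow> L < f t \<Longrightarrow>
        \<exists>d>0. \<forall>s. 0 < s \<and> s < d \<longrightarrow> f t + (c - \<epsilon>) * s \<le> f (t + s)"
  shows "f a + (c - \<epsilon>) * (b - a) \<le> f b"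
proof (rule real_interval_induct[OF \<open>a \<le> b\<close>, where P = "\<lambda>x. f a + (c - \<epsilon>) * (x - a) \<le> f x"])
  fix x assume x: "x \<in> {a..b}" and below: "\<forall>y\<in>{a..<x}. f a + (c - \<epsilon>) * (y - a) \<le> f y"
  show "f a + (c - \<epsilon>) * (x - a) \<le> f x"
  proof (cases "x = a")
    case False
    have "closed {y \<in> {a..b}. f a + (c - \<epsilon>) * (y - a) \<le> f y}"
      by (intro continuous_on_closed_Collect_le continuous_intros cont closed_atLeastAtMost)
    moreover have "{a..<x} \<subseteq> {y \<in> {a..b}. f a + (c - \<epsilon>) * (y - a) \<le> f y}" using x below by auto
    ultimately have "closure {a..<x} \<subseteq> {y \<in> {a..b}. f a + (c - \<epsilon>) * (y - a) \<le> f y}"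
      by (simp add: closure_minimal)
    moreover have "x \<in> closure {a..<x}" using x False by simp
    ultimately show ?thesis by auto
  qed simp
next
  fix x assume x: "x \<in> {a..<b}" and upto: "\<forall>y\<in>{a..x}. f a + (c - \<epsilon>) * (y - a) \<le> f y"
  have "- (\<epsilon> * (b - a)) \<le> - (\<epsilon> * (x - a))" using x \<open>0 < \<epsilon>\<close> by (simp add: mult_left_mono)
  also have "\<dots> \<le> (c - \<epsilon>) * (x - a)" using x \<open>0 \<le> c\<close> by (simp add: left_diff_distrib)
  finally have "- (\<epsilon> * (b - a)) \<le> (c - \<epsilon>) * (x - a)" .
  moreover have "f a + (c - \<epsilon>) * (x - a) \<le> f x" using upto x by auto
  ultimately have "L < f x" using \<epsilon>_small by linarith
  then obtain d where d: "d > 0" "\<forall>s. 0 < s \<and> s < d \<longrightarrow> f x + (c - \<epsilon>) * s \<le> f (x + s)"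
    using rate[OF x] by blast
  show "\<exists>d>0. \<forall>y\<in>{x<..<x + d}. f a + (c - \<epsilon>) * (y - a) \<le> f y"
  proof (intro exI[of _ d] conjI ballI)
    fix y assume "y \<in> {x<..<x + d}"
    then have "f x + (c - \<epsilon>) * (y - x) \<le> f y" using d(2)[rule_format, of "y - x"] by auto
    moreover have "f a + (c - \<epsilon>) * (x - a) \<le> f x" using upto x by auto
    ultimately show "f a + (c - \<epsilon>) * (y - a) \<le> f y" by (simp add: algebra_simps)
  qed (rule d(1))
qed

lemma growth_from_right_rate:
  fixes f :: "real \<Rightarrow> real"
  assumes "a \<le> b" and "continuous_on {a..b} f" and "0 \<le> c" and "L < f a"
    and rate: "\<And>t \<epsilon>. t \<in> {a..<b} \<Longrightarrow> L < f t \<Longrightarrow> 0 < \<epsilon> \<Longrightarrow>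
        \<exists>d>0. \<forall>s. 0 < s \<and> s < d \<longrightarrow> f t + (c - \<epsilon>) * s \<le> f (t + s)"
  shows "f a + c * (b - a) \<le> f b"
proof (rule field_le_epsilon)
  fix e :: real assume "0 < e"
  define \<mu> where "\<mu> = min e (f a - L)"
  define \<epsilon> where "\<epsilon> = \<mu> / (b - a + 1)"
  have "0 < \<mu>" using \<open>0 < e\<close> \<open>L < f a\<close> by (simp add: \<mu>_def)
  then have "0 < \<epsilon>" using \<open>a \<le> b\<close> by (simp add: \<epsilon>_def)
  moreover have "\<epsilon> * (b - a + 1) = \<mu>" using \<open>a \<le> b\<close> by (simp add: \<epsilon>_def)
  ultimately have "\<epsilon> * (b - a) < \<mu>" by (simp add: algebra_simps)
  then have "\<epsilon> * (b - a) < f a - L" "\<epsilon> * (b - a) < e" by (auto simp: \<mu>_def)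
  moreover have "f a + (c - \<epsilon>) * (b - a) \<le> f b"
    using growth_from_right_rate_eps[OF assms(1-3) \<open>0 < \<epsilon>\<close>] rate \<open>0 < \<epsilon>\<close> calculation(1) by blast
  ultimately show "f a + c * (b - a) \<le> f b + e" by (simp add: algebra_simps)
qed

lemma norm_sq_diff_rescaled:
  fixes e y :: "'a::real_inner"
  assumes "norm e = 1"
  shows "(norm (\<rho> *\<^sub>R e + v *\<^sub>R y))\<^sup>2 - (norm ((v * \<rho>) *\<^sub>R e + y))\<^sup>2 = (1 - v\<^sup>2) * (\<rho>\<^sup>2 - (norm y)\<^sup>2)"
proof -
  have "e \<bullet> e = 1" using assms by (simp add: power2_norm_eq_inner[symmetric])
  then show ?thesis
    unfolding power2_norm_eq_inner
    by (simp add: inner_add_left inner_add_right inner_commute algebra_simps power2_eq_square)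
qed

lemma cball_enlargements_avoid_closed:
  fixes c :: "'i \<Rightarrow> 'a::heine_borel" and r :: "'i \<Rightarrow> real"
  assumes "finite I" "I \<noteq> {}" "closed T" and disj: "(\<Inter>i\<in>I. cball (c i) (r i)) \<inter> T = {}"
  shows "\<exists>\<delta>0>0. \<forall>\<delta>. 0 < \<delta> \<and> \<delta> < \<delta>0 \<longrightarrow> (\<Inter>i\<in>I. cball (c i) (r i + \<delta>)) \<inter> T = {}"
proof -
  define excess where "excess x = (\<Sum>i\<in>I. max 0 (dist x (c i) - r i))" for x
  obtain j where "j \<in> I" using assms(2) by blast
  define K where "K = T \<inter> cball (c j) (r j + 1)"
  have excess_pos: "excess x > 0" if "x \<in> T" for x
  proof -
    have "x \<notin> (\<Inter>i\<in>I. cball (c i) (r i))" using disj that by blast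
    then obtain i where i: "i \<in> I" "dist (c i) x > r i" by (auto simp: not_le)
    have "max 0 (dist x (c i) - r i) \<le> excess x"
      unfolding excess_def using i \<open>finite I\<close> by (intro member_le_sum) auto
    moreover have "max 0 (dist x (c i) - r i) > 0" using i by (simp add: dist_commute)
    ultimately show ?thesis by linarith
  qed
  obtain m where m: "m > 0" "\<forall>x\<in>K. m \<le> excess x"
  proof (cases "K = {}")
    case False
    have "compact K" unfolding K_def using \<open>closed T\<close> by (intro closed_Int_compact) auto
    moreover have "continuous_on K excess" unfolding excess_def by (intro continuous_intros)
    ultimately obtain x where "x \<in> K" "\<forall>y\<in>K. excess x \<le> excess y"
      using continuous_attains_inf[OF _ False] by blast
    then show ?thesis using that excess_pos unfolding K_def by blast
  qed (use that[of 1] in simp)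
  define \<delta>0 where "\<delta>0 = min 1 (m / card I)"
  have card: "card I > 0" using assms(1,2) by (simp add: card_gt_0_iff)
  show ?thesis
  proof (intro exI[of _ \<delta>0] conjI allI impI)
    show "\<delta>0 > 0" using m card by (simp add: \<delta>0_def)
    fix \<delta> assume \<delta>: "0 < \<delta> \<and> \<delta> < \<delta>0"
    show "(\<Inter>i\<in>I. cball (c i) (r i + \<delta>)) \<inter> T = {}"
    proof (rule ccontr)
      assume "\<not> ?thesis"
      then obtain x where x: "x \<in> T" "\<forall>i\<in>I. dist (c i) x \<le> r i + \<delta>" by auto
      have "x \<in> K" using x \<delta> \<open>j \<in> I\<close> by (auto simp: K_def \<delta>0_def)
      then have "m \<le> excess x" using m by blast
      also have "excess x \<le> card I * \<delta>"
        unfolding excess_def by (rule sum_bounded_above) (use x(2) \<delta> in \<open>auto simp: dist_commute\<close>)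
      also have "\<dots> < m" using \<delta> card by (simp add: \<delta>0_def field_simps)
      finally show False by simp
    qed
  qed
qed

lemma admissible_evader_continuous_on:
  assumes "admissible_evader nuE t0 xE" "0 \<le> nuE"
  shows "continuous_on {t0..} xE"
proof (rule lipschitz_on_continuous_on)
  show "nuE-lipschitz_on {t0..} xE"
    using assms by (intro lipschitz_onI) (auto simp: admissible_evader_def dist_norm)
qed

lemma capture_time_exists:
  assumes "continuous_on {t0..} xE" "\<forall>i<N. continuous_on {t0..} (xP i)"
    and "t0 \<le> t" "captured N xE xP t"
  shows "\<exists>T. capture_time N t0 xE xP T"
proof -
  define K where "K = {t. t0 \<le> t \<and> captured N xE xP t}"
  have K_eq: "K = (\<Union>i\<in>{..<N}. {t0..} \<inter> (\<lambda>t. xP i t - xE t) -` {0})"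
    unfolding K_def captured_def by auto
  have "closed ({t0..} \<inter> (\<lambda>t. xP i t - xE t) -` {0})" if "i \<in> {..<N}" for i
  proof (rule continuous_closed_preimage)
    show "continuous_on {t0..} (\<lambda>t. xP i t - xE t)"
      using assms(1,2) that by (intro continuous_intros) auto
  qed simp_all
  then have "closed K" unfolding K_eq by (intro closed_UN) auto
  have "K \<noteq> {}" using assms(3,4) unfolding K_def by blast
  have "bdd_below K" unfolding K_def by (rule bdd_belowI[of _ t0]) simp
  have "Inf K \<in> K" using \<open>K \<noteq> {}\<close> \<open>bdd_below K\<close> \<open>closed K\<close> by (rule closed_contains_Inf)
  have "\<not> captured N xE xP s" if "s \<in> {t0..<Inf K}" for s
  proof
    assume "captured N xE xP s"
    then have "s \<in> K" using that by (simp add: K_def)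
    then have "Inf K \<le> s" using \<open>bdd_below K\<close> by (rule cInf_lower)
    then show False using that by simp
  qed
  then have "capture_time N t0 xE xP (Inf K)" using \<open>Inf K \<in> K\<close> by (simp add: K_def capture_time_def)
  then show ?thesis ..
qed

locale pursuit_law =
  fixes nuE u \<delta> :: real and xE0 xP0 :: pt
  assumes nuE_pos: "0 < nuE" and u_pos: "0 < u" and slower: "nu_ratio nuE u < 1"
    and \<delta>_pos: "0 < \<delta>"
begin

definition "\<nu> = nu_ratio nuE u"
definition "\<alpha> = alpha_c nuE u"
definition "\<beta> = beta_c nuE u"
definition "\<gamma> = gamma_c nuE u"
definition "RC = apoll_radius nuE u xE0 xP0 + \<delta>"
definition "xC = apoll_center nuE u xE0 xP0"

definition \<rho> :: "pt \<Rightarrow> pt \<Rightarrow> real" where "\<rho> E P = RC - apoll_radius nuE u E P"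
definition yA :: "pt \<Rightarrow> pt \<Rightarrow> pt" where "yA E P = apoll_center nuE u E P - xC"

text \<open>The Apollonius disc of (E, P) lies in C iff norm (yA E P) \<le> \<rho> E P.\<close>
definition margin :: "pt \<Rightarrow> pt \<Rightarrow> real" where "margin E P = ((\<rho> E P)\<^sup>2 - (norm (yA E P))\<^sup>2) / 2"

text \<open>(- \<gamma> wE, \<gamma> zP) is the gradient of margin in (E, P); the pursuit law moves along zP.\<close>
definition zP :: "pt \<Rightarrow> pt \<Rightarrow> pt" where "zP E P = \<rho> E P *\<^sub>R sgn (E - P) + \<nu> *\<^sub>R yA E P"
definition wE :: "pt \<Rightarrow> pt \<Rightarrow> pt" where "wE E P = \<rho> E P *\<^sub>R sgn (E - P) + (1 / \<nu>) *\<^sub>R yA E P"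
definition rate :: "pt \<Rightarrow> pt \<Rightarrow> real" where "rate E P = \<gamma> * (u * norm (zP E P) - nuE * norm (wE E P))"

lemma \<nu>_pos: "0 < \<nu>" and \<nu>_less_1: "\<nu> < 1"
  using nuE_pos u_pos slower by (auto simp: \<nu>_def nu_ratio_def)

lemma one_minus_\<nu>_sq_pos: "0 < 1 - \<nu>\<^sup>2"
  using \<nu>_pos \<nu>_less_1 by (simp add: power_less_one_iff)

lemma nuE_mult: "nuE * a = u * (\<nu> * a)"
  using u_pos by (simp add: \<nu>_def nu_ratio_def)

lemma \<gamma>_pos: "0 < \<gamma>"
  using \<nu>_pos one_minus_\<nu>_sq_pos by (simp add: \<gamma>_def gamma_c_def alpha_c_def \<nu>_def[symmetric])

lemma \<alpha>_eq: "\<alpha> = \<gamma> / \<nu>"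
  using \<nu>_pos by (simp add: \<alpha>_def \<gamma>_def gamma_c_def \<nu>_def[symmetric])

lemma \<beta>_eq: "\<beta> = \<nu> * \<gamma>"
  by (simp add: \<beta>_def \<gamma>_def beta_c_def gamma_c_def \<nu>_def[symmetric] power2_eq_square)

lemma \<alpha>_minus_\<beta>: "\<alpha> - \<beta> = 1"
  using one_minus_\<nu>_sq_pos
  by (simp add: \<alpha>_def \<beta>_def alpha_c_def beta_c_def \<nu>_def[symmetric] field_simps)

lemma \<beta>_nonneg: "0 \<le> \<beta>" and \<beta>_le_\<gamma>: "\<beta> \<le> \<gamma>"
  using \<nu>_pos \<nu>_less_1 \<gamma>_pos by (simp_all add: \<beta>_eq)

lemma \<rho>_eq: "\<rho> E P = RC - \<gamma> * norm (E - P)"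
  by (simp add: \<rho>_def apoll_radius_def \<gamma>_def)

lemma yA_eq: "yA E P = \<alpha> *\<^sub>R E - \<beta> *\<^sub>R P - xC"
  by (simp add: yA_def apoll_center_def \<alpha>_def \<beta>_def)

lemma margin_start: "margin xE0 xP0 = \<delta>\<^sup>2 / 2"
  by (simp add: margin_def \<rho>_def RC_def yA_def xC_def)

lemma pursuer_vel_eq: "pursuer_vel nuE u \<delta> xE0 xP0 E P = (u / norm (zP E P)) *\<^sub>R zP E P"
  by (simp add: pursuer_vel_def Let_def zP_def \<rho>_def yA_def RC_def xC_def \<nu>_def sgn_div_norm
      divide_inverse_commute)

lemma pursuer_vel_inner_zP: "pursuer_vel nuE u \<delta> xE0 xP0 E P \<bullet> zP E P = u * norm (zP E P)"
  by (simp add: pursuer_vel_eq power2_norm_eq_inner[symmetric] power2_eq_square)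

lemma norm_pursuer_vel_le: "norm (pursuer_vel nuE u \<delta> xE0 xP0 E P) \<le> u"
  using u_pos by (simp add: pursuer_vel_eq)

lemma has_derivative_margin:
  assumes "E \<noteq> P"
  shows "((\<lambda>x. margin (fst x) (snd x)) has_derivative
          (\<lambda>d. \<gamma> * (snd d \<bullet> zP E P) - \<gamma> * (fst d \<bullet> wE E P))) (at (E, P))"
proof -
  define r where "r x = \<rho> (fst x) (snd x)" for x :: "pt \<times> pt"
  define y where "y x = yA (fst x) (snd x)" for x :: "pt \<times> pt"
  define r' where "r' d = - \<gamma> * ((fst d - snd d) \<bullet> sgn (E - P))" for d :: "pt \<times> pt"
  define y' where "y' d = \<alpha> *\<^sub>R fst d - \<beta> *\<^sub>R snd d" for d :: "pt \<times> pt"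
  have "((\<lambda>x. fst x - snd x) has_derivative (\<lambda>d. fst d - snd d)) (at (E, P))"
    by (auto intro!: derivative_eq_intros)
  from has_derivative_compose[OF this has_derivative_norm] assms
  have "(r has_derivative r') (at (E, P))"
    unfolding r_def r'_def \<rho>_eq by (auto intro!: derivative_eq_intros)
  moreover have "(y has_derivative y') (at (E, P))"
    unfolding y_def y'_def yA_eq by (auto intro!: derivative_eq_intros)
  ultimately have "((\<lambda>x. (1/2) * (r x * r x - y x \<bullet> y x)) has_derivative
      (\<lambda>d. (1/2) * ((r (E, P) * r' d + r' d * r (E, P)) - (y (E, P) \<bullet> y' d + y' d \<bullet> y (E, P)))))
      (at (E, P))"
    by (intro has_derivative_mult_right has_derivative_diff has_derivative_mult has_derivative_inner)
  moreover have "(\<lambda>x. (1/2) * (r x * r x - y x \<bullet> y x)) = (\<lambda>x. margin (fst x) (snd x))"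
    by (simp add: fun_eq_iff r_def y_def margin_def power2_norm_eq_inner flip: power2_eq_square)
  moreover have "(\<lambda>d. (1/2) * ((r (E, P) * r' d + r' d * r (E, P)) - (y (E, P) \<bullet> y' d + y' d \<bullet> y (E, P))))
      = (\<lambda>d. \<gamma> * (snd d \<bullet> zP E P) - \<gamma> * (fst d \<bullet> wE E P))"
    using \<nu>_pos
    by (auto simp: fun_eq_iff r_def y_def r'_def y'_def zP_def wE_def \<alpha>_eq \<beta>_eq inner_commute
        inner_add_right inner_diff_right inner_diff_left algebra_simps)
  ultimately show ?thesis by simp
qed

lemma pursuit_gain_lower_bound:
  assumes dE: "norm dE \<le> nuE * s" and dP: "norm (dP - s *\<^sub>R pursuer_vel nuE u \<delta> xE0 xP0 E P) \<le> e * s"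
  shows "(rate E P - \<gamma> * e * norm (zP E P)) * s \<le> \<gamma> * (dP \<bullet> zP E P) - \<gamma> * (dE \<bullet> wE E P)"
proof -
  define v where "v = pursuer_vel nuE u \<delta> xE0 xP0 E P"
  have "\<bar>(dP - s *\<^sub>R v) \<bullet> zP E P\<bar> \<le> norm (dP - s *\<^sub>R v) * norm (zP E P)"
    by (rule Cauchy_Schwarz_ineq2)
  also have "\<dots> \<le> e * s * norm (zP E P)" using dP by (simp add: v_def mult_right_mono)
  finally have "s * (u * norm (zP E P)) - e * s * norm (zP E P) \<le> dP \<bullet> zP E P"
    using pursuer_vel_inner_zP[of E P] by (simp add: v_def inner_diff_left)
  moreover have "dE \<bullet> wE E P \<le> nuE * s * norm (wE E P)"
    using norm_cauchy_schwarz[of dE "wE E P"] mult_right_mono[OF dE norm_ge_zero[of "wE E P"]] by linarith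
  moreover have "(u * norm (zP E P) - nuE * norm (wE E P) - e * norm (zP E P)) * s
      = s * (u * norm (zP E P)) - e * s * norm (zP E P) - nuE * s * norm (wE E P)"
    by (simp add: algebra_simps)
  ultimately have "(u * norm (zP E P) - nuE * norm (wE E P) - e * norm (zP E P)) * s
      \<le> dP \<bullet> zP E P - dE \<bullet> wE E P"
    by linarith
  then have "\<gamma> * ((u * norm (zP E P) - nuE * norm (wE E P) - e * norm (zP E P)) * s)
      \<le> \<gamma> * (dP \<bullet> zP E P - dE \<bullet> wE E P)"
    using \<gamma>_pos by (simp add: mult_left_mono)
  moreover have "\<gamma> * ((u * norm (zP E P) - nuE * norm (wE E P) - e * norm (zP E P)) * s)
      = (rate E P - \<gamma> * e * norm (zP E P)) * s"
    by (simp add: rate_def algebra_simps)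
  ultimately show ?thesis by (simp add: right_diff_distrib)
qed

lemma margin_first_order_lower_bound:
  assumes "E \<noteq> P" "0 < \<eta>"
  obtains d where "0 < d" "\<And>dE dP. norm (dE, dP) < d \<Longrightarrow>
    \<gamma> * (dP \<bullet> zP E P) - \<gamma> * (dE \<bullet> wE E P) - \<eta> * norm (dE, dP) \<le> margin (E + dE) (P + dP) - margin E P"
proof -
  obtain d where "0 < d" and d: "\<forall>x. norm (x - (E, P)) < d \<longrightarrow>
      norm (margin (fst x) (snd x) - margin E P - (\<gamma> * (snd (x - (E, P)) \<bullet> zP E P) - \<gamma> * (fst (x - (E, P)) \<bullet> wE E P)))
        \<le> \<eta> * norm (x - (E, P))"
    using has_derivative_margin[OF assms(1), unfolded has_derivative_at_alt] assms(2) by force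
  show ?thesis
  proof (rule that[OF \<open>0 < d\<close>])
    fix dE dP :: pt assume "norm (dE, dP) < d"
    then show "\<gamma> * (dP \<bullet> zP E P) - \<gamma> * (dE \<bullet> wE E P) - \<eta> * norm (dE, dP) \<le> margin (E + dE) (P + dP) - margin E P"
      using d[rule_format, of "(E + dE, P + dP)"] by simp
  qed
qed

lemma margin_increment_lower_bound:
  assumes "E \<noteq> P" "0 < \<epsilon>"
  shows "\<exists>e>0. \<exists>d>0. \<forall>s dE dP. 0 < s \<and> s < d \<and> norm dE \<le> nuE * s \<and>
           norm (dP - s *\<^sub>R pursuer_vel nuE u \<delta> xE0 xP0 E P) \<le> e * s \<longrightarrow>
           margin E P + (rate E P - \<epsilon>) * s \<le> margin (E + dE) (P + dP)"
proof -
  define v where "v = pursuer_vel nuE u \<delta> xE0 xP0 E P"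
  define K where "K = nuE + u + 1"
  define Z where "Z = \<gamma> * norm (zP E P) + 1"
  define e where "e = min 1 (\<epsilon> / (2 * Z))"
  have K: "0 < K" using nuE_pos u_pos by (simp add: K_def)
  have Z: "0 < Z" using \<gamma>_pos by (simp add: Z_def add_nonneg_pos)
  then have "0 < e" "e \<le> 1" using \<open>0 < \<epsilon>\<close> by (simp_all add: e_def)
  have "\<gamma> * e * norm (zP E P) \<le> e * Z" using \<open>0 < e\<close> by (simp add: Z_def algebra_simps)
  also have "\<dots> \<le> \<epsilon> / (2 * Z) * Z" using Z by (intro mult_right_mono) (auto simp: e_def)
  also have "\<dots> = \<epsilon> / 2" using Z by simp
  finally have e_small: "\<gamma> * e * norm (zP E P) \<le> \<epsilon> / 2" .
  obtain d where "0 < d" and d: "\<And>dE dP. norm (dE, dP) < d \<Longrightarrow>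
      \<gamma> * (dP \<bullet> zP E P) - \<gamma> * (dE \<bullet> wE E P) - \<epsilon> / (2 * K) * norm (dE, dP) \<le> margin (E + dE) (P + dP) - margin E P"
    using margin_first_order_lower_bound[OF assms(1)] K \<open>0 < \<epsilon>\<close> by (metis divide_pos_pos zero_less_numeral mult_pos_pos)
  have "margin E P + (rate E P - \<epsilon>) * s \<le> margin (E + dE) (P + dP)"
    if s: "0 < s \<and> s < d / K \<and> norm dE \<le> nuE * s \<and> norm (dP - s *\<^sub>R v) \<le> e * s"
    for s :: real and dE dP :: pt
  proof -
    have "norm dP \<le> norm (s *\<^sub>R v) + norm (dP - s *\<^sub>R v)" by (rule norm_triangle_sub)
    moreover have "norm (s *\<^sub>R v) \<le> u * s"
      using norm_pursuer_vel_le[of E P] s by (simp add: v_def mult.commute mult_left_mono)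
    moreover have "norm (dP - s *\<^sub>R v) \<le> e * s" "e * s \<le> s" "norm dE \<le> nuE * s"
      using \<open>e \<le> 1\<close> s by (simp_all add: mult_left_le_one_le)
    moreover have "K * s = nuE * s + u * s + s" by (simp add: K_def algebra_simps)
    ultimately have "norm (dE, dP) \<le> K * s" using norm_Pair_le[of dE dP] by linarith
    moreover have "K * s < d" using s K by (simp add: field_simps)
    ultimately have "\<epsilon> / (2 * K) * norm (dE, dP) \<le> \<epsilon> / 2 * s" "norm (dE, dP) < d"
      using K \<open>0 < \<epsilon>\<close> mult_left_mono[of "norm (dE, dP)" "K * s" "\<epsilon> / (2 * K)"] by simp_all
    moreover have "(rate E P - \<epsilon> / 2) * s \<le> \<gamma> * (dP \<bullet> zP E P) - \<gamma> * (dE \<bullet> wE E P)"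
    proof -
      have "(rate E P - \<gamma> * e * norm (zP E P)) * s \<le> \<gamma> * (dP \<bullet> zP E P) - \<gamma> * (dE \<bullet> wE E P)"
        using pursuit_gain_lower_bound[of dE s dP E P e] s by (simp add: v_def)
      moreover have "\<gamma> * e * norm (zP E P) * s \<le> \<epsilon> / 2 * s" using e_small s by (intro mult_right_mono) auto
      ultimately show ?thesis by (simp add: left_diff_distrib)
    qed
    ultimately show ?thesis using d[of dE dP] by (simp add: algebra_simps)
  qed
  then show ?thesis
    using \<open>0 < e\<close> \<open>0 < d\<close> K unfolding v_def by (intro exI[of _ e] exI[of _ "d / K"] conjI) auto
qed

text \<open>The evader is only Lipschitz, so the margin only admits a lower Dini estimate.\<close>
lemma margin_right_rate:
  fixes xE xP :: "real \<Rightarrow> pt"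
  assumes adm: "admissible_evader nuE t0 xE" and "t0 \<le> t" and "xE t \<noteq> xP t"
    and vel: "(xP has_vector_derivative pursuer_vel nuE u \<delta> xE0 xP0 (xE t) (xP t)) (at t within {t0..})"
    and "0 < \<epsilon>"
  shows "\<exists>d>0. \<forall>s. 0 < s \<and> s < d \<longrightarrow>
           margin (xE t) (xP t) + (rate (xE t) (xP t) - \<epsilon>) * s \<le> margin (xE (t + s)) (xP (t + s))"
proof -
  obtain e d where "0 < e" "0 < d" and incr: "\<And>s dE dP. 0 < s \<Longrightarrow> s < d \<Longrightarrow> norm dE \<le> nuE * s \<Longrightarrow>
      norm (dP - s *\<^sub>R pursuer_vel nuE u \<delta> xE0 xP0 (xE t) (xP t)) \<le> e * s \<Longrightarrow>
      margin (xE t) (xP t) + (rate (xE t) (xP t) - \<epsilon>) * s \<le> margin (xE t + dE) (xP t + dP)"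
    using margin_increment_lower_bound[OF \<open>xE t \<noteq> xP t\<close> \<open>0 < \<epsilon>\<close>] by blast
  from vel \<open>0 < e\<close> obtain d1 where "0 < d1" and d1: "\<And>y. y \<in> {t0..} \<Longrightarrow> norm (y - t) < d1 \<Longrightarrow>
      norm (xP y - xP t - (y - t) *\<^sub>R pursuer_vel nuE u \<delta> xE0 xP0 (xE t) (xP t)) \<le> e * norm (y - t)"
    unfolding has_vector_derivative_def has_derivative_within_alt by blast
  show ?thesis
  proof (intro exI[of _ "min d d1"] conjI allI impI)
    fix s assume s: "0 < s \<and> s < min d d1"
    have "\<forall>a b. t0 \<le> a \<longrightarrow> t0 \<le> b \<longrightarrow> norm (xE b - xE a) \<le> nuE * \<bar>b - a\<bar>"
      using adm unfolding admissible_evader_def .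
    then have "norm (xE (t + s) - xE t) \<le> nuE * \<bar>(t + s) - t\<bar>"
      using \<open>t0 \<le> t\<close> s by (meson add_increasing2 less_imp_le)
    moreover have "norm (xP (t + s) - xP t - s *\<^sub>R pursuer_vel nuE u \<delta> xE0 xP0 (xE t) (xP t)) \<le> e * s"
      using d1[of "t + s"] s \<open>t0 \<le> t\<close> by simp
    ultimately show "margin (xE t) (xP t) + (rate (xE t) (xP t) - \<epsilon>) * s \<le> margin (xE (t + s)) (xP (t + s))"
      using incr[of s "xE (t + s) - xE t" "xP (t + s) - xP t"] s by simp
  qed (use \<open>0 < d\<close> \<open>0 < d1\<close> in simp)
qed

lemma norm_zP_wE_sq_diff:
  assumes "E \<noteq> P"
  shows "(norm (zP E P))\<^sup>2 - (norm (\<nu> *\<^sub>R wE E P))\<^sup>2 = (1 - \<nu>\<^sup>2) * (2 * margin E P)"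
proof -
  have "\<nu> *\<^sub>R wE E P = (\<nu> * \<rho> E P) *\<^sub>R sgn (E - P) + yA E P"
    using \<nu>_pos by (simp add: wE_def scaleR_add_right)
  then show ?thesis
    using norm_sq_diff_rescaled[of "sgn (E - P)" "\<rho> E P" \<nu> "yA E P"] assms
    by (simp add: zP_def margin_def norm_sgn)
qed

lemma rate_eq: "rate E P = \<gamma> * u * (norm (zP E P) - norm (\<nu> *\<^sub>R wE E P))"
  using \<nu>_pos by (simp add: rate_def nuE_mult algebra_simps)

lemma rate_nonneg:
  assumes "E \<noteq> P" "0 \<le> margin E P"
  shows "0 \<le> rate E P"
proof -
  have "0 \<le> (1 - \<nu>\<^sup>2) * (2 * margin E P)" using one_minus_\<nu>_sq_pos assms(2) by simp
  then have "(norm (\<nu> *\<^sub>R wE E P))\<^sup>2 \<le> (norm (zP E P))\<^sup>2"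
    using norm_zP_wE_sq_diff[OF assms(1)] by linarith
  then have "norm (\<nu> *\<^sub>R wE E P) \<le> norm (zP E P)" by (rule power2_le_imp_le) simp
  then show ?thesis using \<gamma>_pos u_pos by (simp add: rate_eq)
qed

lemma RC_pos: "0 < RC"
  using \<delta>_pos by (simp add: RC_def apoll_radius_def \<gamma>_def[symmetric] add_nonneg_pos \<gamma>_pos less_imp_le)

lemma \<rho>_le_RC: "\<rho> E P \<le> RC"
  using \<gamma>_pos by (simp add: \<rho>_eq)

definition "growth = \<gamma> * u * (1 - \<nu>\<^sup>2) * \<delta>\<^sup>2 / (4 * RC)"

lemma growth_pos: "0 < growth"
  using \<gamma>_pos u_pos one_minus_\<nu>_sq_pos \<delta>_pos RC_pos by (simp add: growth_def)

lemma norm_zP_wE_le: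
  assumes "E \<noteq> P" and y_le: "norm (yA E P) \<le> \<rho> E P"
  shows "norm (zP E P) \<le> 2 * RC" "norm (\<nu> *\<^sub>R wE E P) \<le> 2 * RC"
proof -
  have "0 \<le> \<rho> E P" using y_le norm_ge_zero order_trans by blast
  have "norm (zP E P) \<le> \<rho> E P + \<nu> * norm (yA E P)"
    using norm_triangle_ineq[of "\<rho> E P *\<^sub>R sgn (E - P)" "\<nu> *\<^sub>R yA E P"] \<open>0 \<le> \<rho> E P\<close> \<nu>_pos assms(1)
    by (simp add: zP_def norm_sgn)
  also have "\<dots> \<le> 2 * RC"
    using \<rho>_le_RC[of E P] y_le \<nu>_pos \<nu>_less_1 mult_left_le_one_le[of "norm (yA E P)" \<nu>] by simp
  finally show "norm (zP E P) \<le> 2 * RC" .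
  have "\<nu> *\<^sub>R wE E P = (\<nu> * \<rho> E P) *\<^sub>R sgn (E - P) + yA E P"
    using \<nu>_pos by (simp add: wE_def scaleR_add_right)
  then have "norm (\<nu> *\<^sub>R wE E P) \<le> \<nu> * \<rho> E P + norm (yA E P)"
    using norm_triangle_ineq[of "(\<nu> * \<rho> E P) *\<^sub>R sgn (E - P)" "yA E P"] \<open>0 \<le> \<rho> E P\<close> \<nu>_pos assms(1)
    by (simp add: norm_sgn abs_mult)
  also have "\<dots> \<le> 2 * RC"
    using \<rho>_le_RC[of E P] y_le \<nu>_pos \<nu>_less_1 mult_left_le_one_le[of "\<rho> E P" \<nu>] \<open>0 \<le> \<rho> E P\<close> by simp
  finally show "norm (\<nu> *\<^sub>R wE E P) \<le> 2 * RC" .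
qed

lemma rate_ge_growth:
  assumes "E \<noteq> P" "\<delta>\<^sup>2 / 2 \<le> margin E P" and "norm (yA E P) \<le> \<rho> E P"
  shows "growth \<le> rate E P"
proof -
  define A B where "A = norm (zP E P)" and "B = norm (\<nu> *\<^sub>R wE E P)"
  have A: "A \<le> 2 * RC" and B: "B \<le> 2 * RC"
    using norm_zP_wE_le[OF assms(1,3)] by (simp_all add: A_def B_def)
  have "(A - B) * (A + B) = (1 - \<nu>\<^sup>2) * (2 * margin E P)"
    using norm_zP_wE_sq_diff[OF assms(1)] by (simp add: A_def B_def power2_eq_square algebra_simps)
  moreover have "(1 - \<nu>\<^sup>2) * \<delta>\<^sup>2 \<le> (1 - \<nu>\<^sup>2) * (2 * margin E P)"
    using assms(2) one_minus_\<nu>_sq_pos by (intro mult_left_mono) auto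
  ultimately have prod: "(1 - \<nu>\<^sup>2) * \<delta>\<^sup>2 \<le> (A - B) * (A + B)" by simp
  moreover have "0 < (1 - \<nu>\<^sup>2) * \<delta>\<^sup>2" using one_minus_\<nu>_sq_pos \<delta>_pos by simp
  ultimately have "0 < (A - B) * (A + B)" by linarith
  moreover have "0 \<le> A + B" by (simp add: A_def B_def)
  ultimately have "0 \<le> A - B" by (auto simp: zero_less_mult_iff)
  then have "(A - B) * (A + B) \<le> (A - B) * (4 * RC)" using A B by (intro mult_left_mono) auto
  with prod have "(1 - \<nu>\<^sup>2) * \<delta>\<^sup>2 \<le> (A - B) * (4 * RC)" by linarith
  then have "(1 - \<nu>\<^sup>2) * \<delta>\<^sup>2 / (4 * RC) \<le> A - B" using RC_pos by (simp add: pos_divide_le_eq)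
  then have "\<gamma> * u * ((1 - \<nu>\<^sup>2) * \<delta>\<^sup>2 / (4 * RC)) \<le> \<gamma> * u * (A - B)"
    using \<gamma>_pos u_pos by (intro mult_left_mono) auto
  then show ?thesis by (simp add: growth_def rate_eq A_def B_def)
qed

lemma evader_in_C_disc:
  assumes "norm (yA E P) \<le> \<rho> E P"
  shows "E \<in> C_disc nuE u \<delta> xE0 xP0"
proof -
  have "E - xC = yA E P - \<beta> *\<^sub>R (E - P)"
    using \<alpha>_minus_\<beta> by (simp add: yA_eq algebra_simps flip: scaleR_diff_left)
  then have "norm (E - xC) \<le> norm (yA E P) + \<beta> * norm (E - P)"
    using norm_triangle_ineq4[of "yA E P" "\<beta> *\<^sub>R (E - P)"] \<beta>_nonneg by simp
  also have "\<dots> \<le> \<rho> E P + \<gamma> * norm (E - P)"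
    using assms \<beta>_le_\<gamma> by (intro add_mono mult_right_mono) auto
  also have "\<dots> = RC" by (simp add: \<rho>_eq)
  finally show ?thesis
    by (simp add: C_disc_def xC_def[symmetric] RC_def[symmetric] dist_norm norm_minus_commute)
qed

definition pursuit_until :: "real \<Rightarrow> (real \<Rightarrow> pt) \<Rightarrow> (real \<Rightarrow> pt) \<Rightarrow> real \<Rightarrow> bool" where
  "pursuit_until t0 xE xP b \<longleftrightarrow>
     admissible_evader nuE t0 xE \<and> xE t0 = xE0 \<and> xP t0 = xP0 \<and> continuous_on {t0..} xP \<and> t0 \<le> b \<and>
     (\<forall>t\<in>{t0..<b}. xE t \<noteq> xP t \<and>
        (xP has_vector_derivative pursuer_vel nuE u \<delta> xE0 xP0 (xE t) (xP t)) (at t within {t0..}))"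

lemma pursuit_until_mono: "pursuit_until t0 xE xP b \<Longrightarrow> t0 \<le> b' \<Longrightarrow> b' \<le> b \<Longrightarrow> pursuit_until t0 xE xP b'"
  unfolding pursuit_until_def by auto

lemma continuous_on_margin_until:
  assumes "pursuit_until t0 xE xP b"
  shows "continuous_on {t0..b} (\<lambda>t. margin (xE t) (xP t))" "continuous_on {t0..b} (\<lambda>t. \<rho> (xE t) (xP t))"
proof -
  have "continuous_on {t0..} xE" "continuous_on {t0..} xP"
    using assms nuE_pos admissible_evader_continuous_on by (auto simp: pursuit_until_def)
  then have "continuous_on {t0..b} xE" "continuous_on {t0..b} xP"
    by (auto elim: continuous_on_subset)
  then show "continuous_on {t0..b} (\<lambda>t. margin (xE t) (xP t))" "continuous_on {t0..b} (\<lambda>t. \<rho> (xE t) (xP t))"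
    unfolding margin_def \<rho>_eq yA_eq by (auto intro!: continuous_intros)
qed

lemma margin_growth_until:
  assumes until: "pursuit_until t0 xE xP b" and "0 \<le> c"
    and rate: "\<And>t. t \<in> {t0..<b} \<Longrightarrow> 0 < margin (xE t) (xP t) \<Longrightarrow> c \<le> rate (xE t) (xP t)"
  shows "\<delta>\<^sup>2 / 2 + c * (b - t0) \<le> margin (xE b) (xP b)"
proof -
  have start: "margin (xE t0) (xP t0) = \<delta>\<^sup>2 / 2" using until margin_start by (simp add: pursuit_until_def)
  have "margin (xE t0) (xP t0) + c * (b - t0) \<le> margin (xE b) (xP b)"
  proof (rule growth_from_right_rate[where L = 0])
    show "t0 \<le> b" using until by (simp add: pursuit_until_def)
    show "0 < margin (xE t0) (xP t0)" unfolding start using \<delta>_pos by simp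
  next
    fix t \<epsilon> :: real assume t: "t \<in> {t0..<b}" and "0 < margin (xE t) (xP t)" "0 < \<epsilon>"
    with until obtain d where "0 < d" and d: "\<forall>s. 0 < s \<and> s < d \<longrightarrow>
        margin (xE t) (xP t) + (rate (xE t) (xP t) - \<epsilon>) * s \<le> margin (xE (t + s)) (xP (t + s))"
      using margin_right_rate[of t0 xE t xP \<epsilon>] by (auto simp: pursuit_until_def)
    have "(c - \<epsilon>) * s \<le> (rate (xE t) (xP t) - \<epsilon>) * s" if "0 < s" for s
      using rate[OF t \<open>0 < margin (xE t) (xP t)\<close>] that by (intro mult_right_mono) auto
    with d \<open>0 < d\<close> show "\<exists>d>0. \<forall>s. 0 < s \<and> s < d \<longrightarrow>
        margin (xE t) (xP t) + (c - \<epsilon>) * s \<le> margin (xE (t + s)) (xP (t + s))"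
      by (meson add_left_mono order_trans)
  qed (use assms continuous_on_margin_until in auto)
  then show ?thesis using start by simp
qed

lemma margin_ge_start_until:
  assumes "pursuit_until t0 xE xP b"
  shows "\<delta>\<^sup>2 / 2 \<le> margin (xE b) (xP b)"
  using margin_growth_until[OF assms order_refl] rate_nonneg assms
  by (force simp: pursuit_until_def)

lemma \<rho>_pos_until:
  assumes "pursuit_until t0 xE xP b"
  shows "0 < \<rho> (xE b) (xP b)"
proof (rule ccontr)
  assume "\<not> ?thesis"
  moreover have "\<rho> (xE t0) (xP t0) = \<delta>" "t0 \<le> b"
    using assms by (simp_all add: pursuit_until_def \<rho>_def RC_def)
  ultimately obtain t where t: "t0 \<le> t" "t \<le> b" "\<rho> (xE t) (xP t) = 0"
    using IVT2'[of "\<lambda>t. \<rho> (xE t) (xP t)" b 0 t0] continuous_on_margin_until(2)[OF assms] \<delta>_pos by force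
  have "\<delta>\<^sup>2 / 2 \<le> margin (xE t) (xP t)"
    using margin_ge_start_until pursuit_until_mono[OF assms t(1,2)] by blast
  moreover have "margin (xE t) (xP t) = - (norm (yA (xE t) (xP t)))\<^sup>2 / 2" using t(3) by (simp add: margin_def)
  moreover have "0 < \<delta>\<^sup>2" using \<delta>_pos by simp
  ultimately show False using zero_le_power2[of "norm (yA (xE t) (xP t))"] by linarith
qed

lemma yA_le_\<rho>_until:
  assumes "pursuit_until t0 xE xP b"
  shows "norm (yA (xE b) (xP b)) \<le> \<rho> (xE b) (xP b)"
proof (rule power2_le_imp_le)
  have "\<delta>\<^sup>2 + (norm (yA (xE b) (xP b)))\<^sup>2 \<le> (\<rho> (xE b) (xP b))\<^sup>2"
    using margin_ge_start_until[OF assms] by (simp add: margin_def field_simps)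
  then show "(norm (yA (xE b) (xP b)))\<^sup>2 \<le> (\<rho> (xE b) (xP b))\<^sup>2"
    using zero_le_power2[of \<delta>] by linarith
qed (use \<rho>_pos_until[OF assms] in simp)

lemma pursuit_duration_bound:
  assumes "pursuit_until t0 xE xP b"
  shows "growth * (b - t0) \<le> RC\<^sup>2 / 2"
proof -
  have "growth \<le> rate (xE t) (xP t)" if "t \<in> {t0..<b}" for t
  proof -
    have "pursuit_until t0 xE xP t" using pursuit_until_mono[OF assms] that by auto
    moreover have "xE t \<noteq> xP t" using assms that by (simp add: pursuit_until_def)
    ultimately show ?thesis
      using rate_ge_growth margin_ge_start_until yA_le_\<rho>_until by blast
  qed
  then have "\<delta>\<^sup>2 / 2 + growth * (b - t0) \<le> margin (xE b) (xP b)"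
    using margin_growth_until[OF assms] growth_pos by simp
  also have "\<dots> \<le> (\<rho> (xE b) (xP b))\<^sup>2 / 2" by (simp add: margin_def)
  also have "\<dots> \<le> RC\<^sup>2 / 2"
    using \<rho>_pos_until[OF assms] \<rho>_le_RC by (simp add: power_mono)
  finally show ?thesis using zero_le_power2[of \<delta>] by linarith
qed

end

context
  fixes N :: nat and u :: "nat \<Rightarrow> real" and nuE \<delta> t0 :: real
    and xE0 :: pt and xP0 :: "nat \<Rightarrow> pt" and xE :: "real \<Rightarrow> pt" and xP :: "nat \<Rightarrow> real \<Rightarrow> pt"
  assumes speeds: "0 < nuE" "\<forall>i<N. 0 < u i \<and> nu_ratio nuE (u i) < 1"
    and "0 < \<delta>"
    and evader: "admissible_evader nuE t0 xE" "xE t0 = xE0"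
    and pursuers: "\<forall>i<N. xP i t0 = xP0 i" "follows_law N u nuE \<delta> t0 xE xP"
begin

lemma pursuit_law_instance: "i < N \<Longrightarrow> pursuit_law nuE (u i) \<delta>"
  using speeds \<open>0 < \<delta>\<close> by unfold_locales auto

lemma pursuit_until_before_capture:
  assumes "i < N" "t0 \<le> b" and uncaptured: "\<forall>s\<in>{t0..<b}. \<not> captured N xE xP s"
  shows "pursuit_law.pursuit_until nuE (u i) \<delta> xE0 (xP0 i) t0 xE (xP i) b"
proof -
  have "xE t \<noteq> xP i t \<and>
      (xP i has_vector_derivative pursuer_vel nuE (u i) \<delta> xE0 (xP0 i) (xE t) (xP i t)) (at t within {t0..})"
    if "t \<in> {t0..<b}" for t
  proof
    show "xE t \<noteq> xP i t" using uncaptured that \<open>i < N\<close> unfolding captured_def by fastforce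
    have "\<forall>s\<in>{t0..t}. \<not> captured N xE xP s" using uncaptured that by auto
    then show "(xP i has_vector_derivative pursuer_vel nuE (u i) \<delta> xE0 (xP0 i) (xE t) (xP i t)) (at t within {t0..})"
      using pursuers evader that \<open>i < N\<close> unfolding follows_law_def by auto
  qed
  then show ?thesis
    using pursuit_law.pursuit_until_def[OF pursuit_law_instance[OF \<open>i < N\<close>]] pursuers evader assms
    by (auto simp: follows_law_def)
qed

lemma eventually_captured:
  assumes "1 \<le> N"
  shows "\<exists>t\<ge>t0. captured N xE xP t"
proof (rule ccontr)
  assume never: "\<not> ?thesis"
  interpret pursuit_law nuE "u 0" \<delta> xE0 "xP0 0" using pursuit_law_instance assms by simp
  define b where "b = t0 + RC\<^sup>2 / (2 * growth) + 1"
  have "t0 \<le> b" using growth_pos by (simp add: b_def)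
  then have "growth * (b - t0) \<le> RC\<^sup>2 / 2"
    using pursuit_duration_bound pursuit_until_before_capture[of 0 b] never assms by auto
  moreover have "growth * (b - t0) = RC\<^sup>2 / 2 + growth" using growth_pos by (simp add: b_def field_simps)
  ultimately show False using growth_pos by simp
qed

lemma capture_inside_C_discs:
  assumes "1 \<le> N"
  shows "\<exists>T. capture_time N t0 xE xP T \<and> (\<forall>s\<in>{t0..T}. xE s \<in> (\<Inter>i<N. C_disc nuE (u i) \<delta> xE0 (xP0 i)))"
proof -
  have "continuous_on {t0..} xE" using admissible_evader_continuous_on evader speeds by simp
  moreover have "\<forall>i<N. continuous_on {t0..} (xP i)" using pursuers by (simp add: follows_law_def)
  ultimately obtain T where T: "capture_time N t0 xE xP T"
    using capture_time_exists eventually_captured[OF assms] by blast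
  have "xE s \<in> C_disc nuE (u i) \<delta> xE0 (xP0 i)" if "s \<in> {t0..T}" "i < N" for s i
  proof -
    have "pursuit_law.pursuit_until nuE (u i) \<delta> xE0 (xP0 i) t0 xE (xP i) s"
      using pursuit_until_before_capture T that by (auto simp: capture_time_def)
    then show ?thesis
      using pursuit_law.evader_in_C_disc pursuit_law.yA_le_\<rho>_until pursuit_law_instance that by blast
  qed
  then show ?thesis using T by blast
qed

lemma pursuers_win_if_C_discs_avoid:
  assumes "1 \<le> N" and "(\<Inter>i<N. C_disc nuE (u i) \<delta> xE0 (xP0 i)) \<inter> Tg = {}"
  shows "pursuers_win N t0 Tg xE xP"
  using capture_inside_C_discs[OF assms(1)] assms(2) unfolding pursuers_win_def by blast

end

theorem mainTheorem8:
  fixes N :: nat and u :: "nat \<Rightarrow> real" and nuE t0 :: real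
    and xE0 :: pt and xP0 :: "nat \<Rightarrow> pt"
  assumes "N \<ge> 1"
    and "0 < nuE"
    and "\<forall>i<N. 0 < u i \<and> nu_ratio nuE (u i) < 1"
    and "\<forall>i<N. xE0 \<noteq> xP0 i"
  shows
    "(\<forall>\<delta>>0. \<forall>xE xP.
        admissible_evader nuE t0 xE \<and> xE t0 = xE0 \<and> (\<forall>i<N. xP i t0 = xP0 i) \<and>
        follows_law N u nuE \<delta> t0 xE xP \<longrightarrow>
        (\<exists>T. capture_time N t0 xE xP T \<and>
             xE T \<in> (\<Inter>i\<in>{..<N}. C_disc nuE (u i) \<delta> xE0 (xP0 i))))
     \<and>
     (\<forall>Tg :: pt set. closed Tg \<and>
        (\<Inter>i\<in>{..<N}. apoll_disc nuE (u i) xE0 (xP0 i)) \<inter> Tg = {} \<longrightarrow>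
        (\<exists>\<delta>0>0. \<forall>\<delta>. 0 < \<delta> \<and> \<delta> < \<delta>0 \<longrightarrow>
           (\<forall>xE xP.
              admissible_evader nuE t0 xE \<and> xE t0 = xE0 \<and> (\<forall>i<N. xP i t0 = xP0 i) \<and>
              follows_law N u nuE \<delta> t0 xE xP \<longrightarrow>
              pursuers_win N t0 Tg xE xP)))"
proof (intro conjI allI impI)
  fix \<delta> :: real and xE :: "real \<Rightarrow> pt" and xP :: "nat \<Rightarrow> real \<Rightarrow> pt"
  assume "0 < \<delta>" and "admissible_evader nuE t0 xE \<and> xE t0 = xE0 \<and> (\<forall>i<N. xP i t0 = xP0 i) \<and>
    follows_law N u nuE \<delta> t0 xE xP"
  then obtain T where "capture_time N t0 xE xP T" "\<forall>s\<in>{t0..T}. xE s \<in> (\<Inter>i<N. C_disc nuE (u i) \<delta> xE0 (xP0 i))"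
    using capture_inside_C_discs[OF assms(2,3) \<open>0 < \<delta>\<close> _ _ _ _ assms(1)] by blast
  then show "\<exists>T. capture_time N t0 xE xP T \<and> xE T \<in> (\<Inter>i\<in>{..<N}. C_disc nuE (u i) \<delta> xE0 (xP0 i))"
    by (auto simp: capture_time_def)
next
  fix Tg :: "pt set"
  assume "closed Tg \<and> (\<Inter>i\<in>{..<N}. apoll_disc nuE (u i) xE0 (xP0 i)) \<inter> Tg = {}"
  then have "\<exists>\<delta>0>0. \<forall>\<delta>. 0 < \<delta> \<and> \<delta> < \<delta>0 \<longrightarrow> (\<Inter>i<N. C_disc nuE (u i) \<delta> xE0 (xP0 i)) \<inter> Tg = {}"
    unfolding C_disc_def
    by (intro cball_enlargements_avoid_closed) (use \<open>N \<ge> 1\<close> in \<open>auto simp: apoll_disc_def lessThan_empty_iff\<close>)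
  then obtain \<delta>0 where "0 < \<delta>0"
    and avoid: "\<And>\<delta>. 0 < \<delta> \<and> \<delta> < \<delta>0 \<Longrightarrow> (\<Inter>i<N. C_disc nuE (u i) \<delta> xE0 (xP0 i)) \<inter> Tg = {}"
    by blast
  show "\<exists>\<delta>0>0. \<forall>\<delta>. 0 < \<delta> \<and> \<delta> < \<delta>0 \<longrightarrow> (\<forall>xE xP.
      admissible_evader nuE t0 xE \<and> xE t0 = xE0 \<and> (\<forall>i<N. xP i t0 = xP0 i) \<and>
      follows_law N u nuE \<delta> t0 xE xP \<longrightarrow> pursuers_win N t0 Tg xE xP)"
  proof (intro exI[of _ \<delta>0] conjI allI impI)
    fix \<delta> :: real and xE :: "real \<Rightarrow> pt" and xP :: "nat \<Rightarrow> real \<Rightarrow> pt"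
    assume \<delta>: "0 < \<delta> \<and> \<delta> < \<delta>0" and "admissible_evader nuE t0 xE \<and> xE t0 = xE0 \<and>
      (\<forall>i<N. xP i t0 = xP0 i) \<and> follows_law N u nuE \<delta> t0 xE xP"
    with pursuers_win_if_C_discs_avoid[OF assms(2,3) _ _ _ _ _ assms(1) avoid[OF \<delta>]]
    show "pursuers_win N t0 Tg xE xP" by simp
  qed (rule \<open>0 < \<delta>0\<close>)
qed

end
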